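(* Let $G$ be a symmetric restaking network and $\alpha_t$ a tight attack in $G$. Then there exists a consolidated attack $\alpha_c$ in $G$ (for a suitable ordering $v_1,\dots,v_m$ of $V$) with $C(\alpha_c)\le C(\alpha_t)$ and $\Pi(\alpha_c)=\Pi(\alpha_t)$.
   Context: A restaking network is a tuple $G=(V,S,\sigma,w,\theta,\pi)$ with finite nonempty validator set $V$, finite service set $S$, stake $\sigma:V\to\mathbb{R}_{>0}$, allocation $w:V\times S\to\mathbb{R}_{\ge0}$ with $w(v,s)\le\sigma(v)$, thresholds $\theta:S\to[0,1]$, prizes $\pi:S\to\mathbb{R}_{>0}$. An attack is $\alpha:V\times S\to\mathbb{R}_{\ge0}$ with $\alpha(v,s)\le w(v,s)$; attacked services $S_\alpha=\{s:\sum_v\alpha(v,s)\ge\theta(s)\sum_v w(v,s)\}$; validator cost $c_v(\alpha)=\min(\sigma(v),\sum_{s\in S_\alpha}\alpha(v,s))$; total cost $C(\alpha)=\sum_vc_v(\alpha)$; prize $\Pi(\alpha)=\sum_{s\in S_\alpha}\pi(s)$. $G$ is symmetric if all validators have the same stake $\sigma$, for each $s$ all validators have the same allocation $w(s)$, and all services have the same threshold $\theta$. Let $m=|V|$. An attack is tight if $\sum_v\alpha(v,s)=\theta m\,w(s)$ for all $s\in S_\alpha$. With $V=\{v_1,\dots,v_m\}$, an attack is consolidated if for every $s\in S_\alpha$ and $i\in\{1,\dots,m\}$: $\alpha(v_i,s)=w(s)$ if $i\le\lfloor\theta m\rfloor$; $\alpha(v_i,s)=(\theta m-\lfloor\theta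 m\rfloor)w(s)$ if $i=\lfloor\theta m\rfloor+1$; $\alpha(v_i,s)=0$ otherwise. *)

theory Defs
  imports Complex_Main
begin

text \<open>A restaking network (V, S, sigma, w, theta, pi). Functions are total on the
  ambient types; only their values on V and S matter.\<close>

definition restaking_network ::
  "'v set \<Rightarrow> 's set \<Rightarrow> ('v \<Rightarrow> real) \<Rightarrow> ('v \<Rightarrow> 's \<Rightarrow> real)
   \<Rightarrow> ('s \<Rightarrow> real) \<Rightarrow> ('s \<Rightarrow> real) \<Rightarrow> bool" where
  "restaking_network V S \<sigma> w \<theta> \<pi> \<longleftrightarrow>
     finite V \<and> V \<noteq> {} \<and> finite S \<and>
     (\<forall>v\<in>V. \<sigma> v > 0) \<and>
     (\<forall>v\<in>V. \<forall>s\<in>S. 0 \<le> w v s \<and> w v s \<le> \<sigma> v) \<and>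
     (\<forall>s\<in>S. 0 \<le> \<theta> s \<and> \<theta> s \<le> 1) \<and>
     (\<forall>s\<in>S. \<pi> s > 0)"

definition symmetric_network ::
  "'v set \<Rightarrow> 's set \<Rightarrow> ('v \<Rightarrow> real) \<Rightarrow> ('v \<Rightarrow> 's \<Rightarrow> real)
   \<Rightarrow> ('s \<Rightarrow> real) \<Rightarrow> ('s \<Rightarrow> real) \<Rightarrow> real \<Rightarrow> ('s \<Rightarrow> real) \<Rightarrow> real \<Rightarrow> bool" where
  "symmetric_network V S \<sigma> w \<theta> \<pi> \<sigma>0 ws \<theta>0 \<longleftrightarrow>
     restaking_network V S \<sigma> w \<theta> \<pi> \<and>
     (\<forall>v\<in>V. \<sigma> v = \<sigma>0) \<and>
     (\<forall>v\<in>V. \<forall>s\<in>S. w v s = ws s) \<and>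
     (\<forall>s\<in>S. \<theta> s = \<theta>0)"

definition is_attack ::
  "'v set \<Rightarrow> 's set \<Rightarrow> ('v \<Rightarrow> 's \<Rightarrow> real) \<Rightarrow> ('v \<Rightarrow> 's \<Rightarrow> real) \<Rightarrow> bool" where
  "is_attack V S w \<alpha> \<longleftrightarrow> (\<forall>v\<in>V. \<forall>s\<in>S. 0 \<le> \<alpha> v s \<and> \<alpha> v s \<le> w v s)"

definition attacked ::
  "'v set \<Rightarrow> 's set \<Rightarrow> ('v \<Rightarrow> 's \<Rightarrow> real) \<Rightarrow> ('s \<Rightarrow> real) \<Rightarrow> ('v \<Rightarrow> 's \<Rightarrow> real) \<Rightarrow> 's set" where
  "attacked V S w \<theta> \<alpha> = {s\<in>S. (\<Sum>v\<in>V. \<alpha> v s) \<ge> \<theta> s * (\<Sum>v\<in>V. w v s)}"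

definition attack_cost ::
  "'v set \<Rightarrow> 's set \<Rightarrow> ('v \<Rightarrow> real) \<Rightarrow> ('v \<Rightarrow> 's \<Rightarrow> real) \<Rightarrow> ('s \<Rightarrow> real)
   \<Rightarrow> ('v \<Rightarrow> 's \<Rightarrow> real) \<Rightarrow> real" where
  "attack_cost V S \<sigma> w \<theta> \<alpha> =
     (\<Sum>v\<in>V. min (\<sigma> v) (\<Sum>s\<in>attacked V S w \<theta> \<alpha>. \<alpha> v s))"

definition attack_prize ::
  "'v set \<Rightarrow> 's set \<Rightarrow> ('v \<Rightarrow> 's \<Rightarrow> real) \<Rightarrow> ('s \<Rightarrow> real) \<Rightarrow> ('s \<Rightarrow> real)
   \<Rightarrow> ('v \<Rightarrow> 's \<Rightarrow> real) \<Rightarrow> real" where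
  "attack_prize V S w \<theta> \<pi> \<alpha> = (\<Sum>s\<in>attacked V S w \<theta> \<alpha>. \<pi> s)"

definition tight_attack ::
  "'v set \<Rightarrow> 's set \<Rightarrow> ('v \<Rightarrow> 's \<Rightarrow> real) \<Rightarrow> ('s \<Rightarrow> real) \<Rightarrow> ('s \<Rightarrow> real) \<Rightarrow> real
   \<Rightarrow> ('v \<Rightarrow> 's \<Rightarrow> real) \<Rightarrow> bool" where
  "tight_attack V S w \<theta> ws \<theta>0 \<alpha> \<longleftrightarrow>
     (\<forall>s\<in>attacked V S w \<theta> \<alpha>. (\<Sum>v\<in>V. \<alpha> v s) = \<theta>0 * real (card V) * ws s)"

text \<open>Consolidated attack with respect to an ordering ord : {1..m} -> V (a bijection).\<close>

definition consolidated_attack ::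
  "'v set \<Rightarrow> 's set \<Rightarrow> ('v \<Rightarrow> 's \<Rightarrow> real) \<Rightarrow> ('s \<Rightarrow> real) \<Rightarrow> ('s \<Rightarrow> real) \<Rightarrow> real
   \<Rightarrow> (nat \<Rightarrow> 'v) \<Rightarrow> ('v \<Rightarrow> 's \<Rightarrow> real) \<Rightarrow> bool" where
  "consolidated_attack V S w \<theta> ws \<theta>0 ord \<alpha> \<longleftrightarrow>
     (let m = card V; k = nat \<lfloor>\<theta>0 * real m\<rfloor> in
      \<forall>s\<in>attacked V S w \<theta> \<alpha>. \<forall>i\<in>{1..m}.
        \<alpha> (ord i) s =
          (if i \<le> k then ws s
           else if i = k + 1 then (\<theta>0 * real m - of_int \<lfloor>\<theta>0 * real m\<rfloor>) * ws s
           else 0))"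

end

theory Submission
  imports Defs
begin

text \<open>Let \<open>A\<close> be the set of services attacked by the tight attack, \<open>W = \<Sum>s\<in>A. w(s)\<close> and
  \<open>x(v) = \<Sum>s\<in>A. \<alpha>(v,s)\<close>, so that \<open>0 \<le> x(v) \<le> W\<close> and, by tightness, \<open>\<Sum>v. x(v) = \<theta>m W\<close>.
  Putting the same consolidated profile on every service of \<open>A\<close> attacks exactly \<open>A\<close>, and its cost is
  \<open>\<lfloor>\<theta>m\<rfloor> min(\<sigma>,W) + min(\<sigma>, (\<theta>m - \<lfloor>\<theta>m\<rfloor>) W)\<close>. This is the least value of \<open>\<Sum>v. min(\<sigma>, x(v))\<close>
  over all such \<open>x\<close>: validators with \<open>x(v) \<ge> \<sigma>\<close> each pay \<open>\<sigma>\<close>, and the others pay their whole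
  share, which together is at least what the remaining full portions \<open>W\<close> would cost.\<close>

definition consolidation_weight :: "real \<Rightarrow> nat \<Rightarrow> real" where
  "consolidation_weight t i =
     (if i \<le> nat \<lfloor>t\<rfloor> then 1 else if i = nat \<lfloor>t\<rfloor> + 1 then t - of_int \<lfloor>t\<rfloor> else 0)"

lemma consolidation_weight_bounds:
  "0 \<le> consolidation_weight t i \<and> consolidation_weight t i \<le> 1"
proof -
  have "0 \<le> t - of_int \<lfloor>t\<rfloor>" "t - of_int \<lfloor>t\<rfloor> \<le> 1"
    by linarith+
  then show ?thesis
    by (simp add: consolidation_weight_def)
qed

lemma sum_step_profile:
  fixes a b :: real
  assumes "k \<le> m"
  shows "(\<Sum>i\<in>{1..m}. if i \<le> k then a else if i = k + 1 then b else 0)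
         = real k * a + (if k < m then b else 0)"
  using assms
proof (induction m)
  case 0
  then show ?case by simp
next
  case (Suc m)
  show ?case
  proof (cases "k \<le> m")
    case True
    then show ?thesis using Suc.IH by auto
  next
    case False
    with Suc.prems have "k = Suc m" by simp
    then have "(\<Sum>i\<in>{1..Suc m}. if i \<le> k then a else if i = k + 1 then b else 0)
             = (\<Sum>i\<in>{1..Suc m}. a)"
      by (intro sum.cong) auto
    with \<open>k = Suc m\<close> show ?thesis by simp
  qed
qed

lemma sum_consolidation_weight_image:
  fixes g :: "real \<Rightarrow> real"
  assumes "g 0 = 0" "0 \<le> t" "t \<le> real m"
  shows "(\<Sum>i\<in>{1..m}. g (consolidation_weight t i))
         = real (nat \<lfloor>t\<rfloor>) * g 1 + g (t - of_int \<lfloor>t\<rfloor>)"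
proof -
  define k where "k = nat \<lfloor>t\<rfloor>"
  have "k \<le> m"
    unfolding k_def using assms(3) by (simp add: nat_le_iff floor_le_iff)
  \<comment> \<open>When \<open>k = m\<close> there is no \<open>(k+1)\<close>-st validator, but then the fractional part vanishes.\<close>
  have frac: "g (t - of_int \<lfloor>t\<rfloor>) = (if k < m then g (t - of_int \<lfloor>t\<rfloor>) else 0)"
  proof (cases "k < m")
    case False
    with \<open>k \<le> m\<close> have "\<lfloor>t\<rfloor> = int m"
      using assms(2) unfolding k_def by (auto simp: nat_eq_iff)
    with assms(3) have "t - of_int \<lfloor>t\<rfloor> = 0"
      by linarith
    with False assms(1) show ?thesis
      by simp
  qed simp
  have "(\<Sum>i\<in>{1..m}. g (consolidation_weight t i))
        = (\<Sum>i\<in>{1..m}. if i \<le> k then g 1 else if i = k + 1 then g (t - of_int \<lfloor>t\<rfloor>) else 0)"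
    using assms(1) by (intro sum.cong) (auto simp: consolidation_weight_def k_def)
  also have "\<dots> = real k * g 1 + g (t - of_int \<lfloor>t\<rfloor>)"
    using sum_step_profile[OF \<open>k \<le> m\<close>] frac by simp
  finally show ?thesis unfolding k_def .
qed

lemma sum_consolidation_weight:
  assumes "0 \<le> t" "t \<le> real m"
  shows "(\<Sum>i\<in>{1..m}. consolidation_weight t i) = t"
  using sum_consolidation_weight_image[of "\<lambda>c. c", OF _ assms] assms(1) by simp

lemma sum_min_ge_capped:
  fixes x :: "'v \<Rightarrow> real"
  assumes "finite V" and x_bounds: "\<forall>v\<in>V. 0 \<le> x v \<and> x v \<le> W" and "0 \<le> \<sigma>"
    and total: "(\<Sum>v\<in>V. x v) = real k * W + c"
  shows "real k * min \<sigma> W + min \<sigma> c \<le> (\<Sum>v\<in>V. min \<sigma> (x v))"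
proof (cases "W \<le> \<sigma>")
  case True
  then have "(\<Sum>v\<in>V. min \<sigma> (x v)) = (\<Sum>v\<in>V. x v)"
    using x_bounds by (intro sum.cong) auto
  with True total show ?thesis by simp
next
  case False
  define B where "B = {v\<in>V. \<sigma> \<le> x v}"
  have "B \<subseteq> V" by (auto simp: B_def)
  have capped: "(\<Sum>v\<in>V. min \<sigma> (x v)) = real (card B) * \<sigma> + (\<Sum>v\<in>V - B. x v)"
  proof -
    have "(\<Sum>v\<in>V. min \<sigma> (x v)) = (\<Sum>v\<in>B. min \<sigma> (x v)) + (\<Sum>v\<in>V - B. min \<sigma> (x v))"
      using sum.subset_diff[OF \<open>B \<subseteq> V\<close> \<open>finite V\<close>, of "\<lambda>v. min \<sigma> (x v)"] by linarith
    also have "(\<Sum>v\<in>V - B. min \<sigma> (x v)) = (\<Sum>v\<in>V - B. x v)"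
      by (intro sum.cong) (auto simp: B_def)
    finally show ?thesis by (simp add: B_def)
  qed
  have "(\<Sum>v\<in>V. x v) = (\<Sum>v\<in>B. x v) + (\<Sum>v\<in>V - B. x v)"
    using sum.subset_diff[OF \<open>B \<subseteq> V\<close> \<open>finite V\<close>, of x] by linarith
  moreover have "(\<Sum>v\<in>B. x v) \<le> real (card B) * W"
    using sum_bounded_above[of B x W] x_bounds \<open>B \<subseteq> V\<close> by auto
  ultimately have rest: "real k * W + c - real (card B) * W \<le> (\<Sum>v\<in>V - B. x v)"
    using total by linarith
  have "0 \<le> (\<Sum>v\<in>V - B. x v)"
    using x_bounds by (intro sum_nonneg) auto
  have "min \<sigma> W = \<sigma>" "min \<sigma> c \<le> \<sigma>" "min \<sigma> c \<le> c"
    using False by auto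
  show ?thesis
  proof (cases "k < card B")
    case True
    then have "real k * \<sigma> + \<sigma> \<le> real (card B) * \<sigma>"
      using \<open>0 \<le> \<sigma>\<close> mult_right_mono[of "real k + 1" "real (card B)" \<sigma>]
      by (simp add: distrib_right)
    with capped \<open>0 \<le> (\<Sum>v\<in>V - B. x v)\<close> \<open>min \<sigma> W = \<sigma>\<close> \<open>min \<sigma> c \<le> \<sigma>\<close>
    show ?thesis by linarith
  next
    case False
    then have "real k * \<sigma> - real (card B) * \<sigma> \<le> real k * W - real (card B) * W"
      using \<open>\<not> W \<le> \<sigma>\<close> mult_left_mono[of \<sigma> W "real k - real (card B)"]
      by (simp add: left_diff_distrib)
    with capped rest \<open>min \<sigma> W = \<sigma>\<close> \<open>min \<sigma> c \<le> c\<close>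
    show ?thesis by linarith
  qed
qed

lemma sum_min_consolidation_weight_le:
  fixes x :: "'v \<Rightarrow> real"
  assumes "finite V" "\<forall>v\<in>V. 0 \<le> x v \<and> x v \<le> W" "0 \<le> \<sigma>"
    and "0 \<le> t" "t \<le> real (card V)" "(\<Sum>v\<in>V. x v) = t * W"
  shows "(\<Sum>i\<in>{1..card V}. min \<sigma> (consolidation_weight t i * W)) \<le> (\<Sum>v\<in>V. min \<sigma> (x v))"
proof -
  have "(\<Sum>i\<in>{1..card V}. min \<sigma> (consolidation_weight t i * W))
        = real (nat \<lfloor>t\<rfloor>) * min \<sigma> W + min \<sigma> ((t - of_int \<lfloor>t\<rfloor>) * W)"
    using sum_consolidation_weight_image[of "\<lambda>c. min \<sigma> (c * W)"] assms(3-5) by simp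
  also have "\<dots> \<le> (\<Sum>v\<in>V. min \<sigma> (x v))"
    using assms(4,6) by (intro sum_min_ge_capped[OF assms(1-3)]) (simp add: algebra_simps)
  finally show ?thesis .
qed

locale tight_symmetric_attack =
  fixes V :: "'v set" and S :: "'s set"
    and \<sigma> :: "'v \<Rightarrow> real" and w :: "'v \<Rightarrow> 's \<Rightarrow> real"
    and \<theta> :: "'s \<Rightarrow> real" and \<pi> :: "'s \<Rightarrow> real"
    and \<sigma>0 :: real and ws :: "'s \<Rightarrow> real" and \<theta>0 :: real
    and \<alpha>t :: "'v \<Rightarrow> 's \<Rightarrow> real" and ord :: "nat \<Rightarrow> 'v"
  assumes symmetric: "symmetric_network V S \<sigma> w \<theta> \<pi> \<sigma>0 ws \<theta>0"
    and attack: "is_attack V S w \<alpha>t"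
    and tight: "tight_attack V S w \<theta> ws \<theta>0 \<alpha>t"
    and ord_bij: "bij_betw ord {1..card V} V"
begin

lemma
  shows V_finite: "finite V"
    and stake: "v \<in> V \<Longrightarrow> \<sigma> v = \<sigma>0"
    and stake_pos: "0 < \<sigma>0"
    and allocation: "v \<in> V \<Longrightarrow> s \<in> S \<Longrightarrow> w v s = ws s"
    and allocation_nonneg: "s \<in> S \<Longrightarrow> 0 \<le> ws s"
    and threshold: "s \<in> S \<Longrightarrow> \<theta> s = \<theta>0"
    and threshold_bounds: "s \<in> S \<Longrightarrow> 0 \<le> \<theta>0 \<and> \<theta>0 \<le> 1"
    and attack_bounds: "v \<in> V \<Longrightarrow> s \<in> S \<Longrightarrow> 0 \<le> \<alpha>t v s \<and> \<alpha>t v s \<le> ws s"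
  using symmetric attack unfolding symmetric_network_def restaking_network_def is_attack_def
  by (metis all_not_in_conv)+

definition targets :: "'s set" where
  "targets = attacked V S w \<theta> \<alpha>t"

definition rank :: "'v \<Rightarrow> nat" where
  "rank = the_inv_into {1..card V} ord"

definition consolidated :: "'v \<Rightarrow> 's \<Rightarrow> real" where
  "consolidated v s =
     (if s \<in> targets then consolidation_weight (\<theta>0 * real (card V)) (rank v) * ws s else 0)"

lemma targets_subset: "targets \<subseteq> S"
  by (auto simp: targets_def attacked_def)

lemma sum_allocation: "s \<in> S \<Longrightarrow> (\<Sum>v\<in>V. w v s) = real (card V) * ws s"
  by (simp add: allocation)

lemma mem_attacked_iff:
  "s \<in> attacked V S w \<theta> \<alpha> \<longleftrightarrow> s \<in> S \<and> \<theta>0 * real (card V) * ws s \<le> (\<Sum>v\<in>V. \<alpha> v s)"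
  by (auto simp: attacked_def threshold sum_allocation)

lemma sum_targets: "s \<in> targets \<Longrightarrow> (\<Sum>v\<in>V. \<alpha>t v s) = \<theta>0 * real (card V) * ws s"
  using tight by (simp add: tight_attack_def targets_def)

lemma sum_rank: "(\<Sum>v\<in>V. g (rank v)) = (\<Sum>i\<in>{1..card V}. g i)"
  unfolding rank_def using sum.reindex_bij_betw[OF bij_betw_the_inv_into[OF ord_bij]] .

lemma rank_ord: "i \<in> {1..card V} \<Longrightarrow> rank (ord i) = i"
  unfolding rank_def using ord_bij by (meson bij_betw_imp_inj_on the_inv_into_f_f)

lemma sum_consolidated:
  assumes "s \<in> targets"
  shows "(\<Sum>v\<in>V. consolidated v s) = \<theta>0 * real (card V) * ws s"
proof -
  have "0 \<le> \<theta>0" "\<theta>0 \<le> 1"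
    using assms targets_subset threshold_bounds by auto
  then have "(\<Sum>i\<in>{1..card V}. consolidation_weight (\<theta>0 * real (card V)) i) = \<theta>0 * real (card V)"
    by (intro sum_consolidation_weight) (auto simp: mult_left_le_one_le)
  with assms show ?thesis
    using sum_rank[of "\<lambda>i. consolidation_weight (\<theta>0 * real (card V)) i * ws s"]
    by (simp add: consolidated_def flip: sum_distrib_right)
qed

lemma attacked_consolidated: "attacked V S w \<theta> consolidated = targets"
proof (intro set_eqI iffI)
  fix s
  assume s: "s \<in> attacked V S w \<theta> consolidated"
  show "s \<in> targets"
  proof (rule ccontr)
    assume "s \<notin> targets"
    with s have "s \<in> S" "\<theta>0 * real (card V) * ws s \<le> 0"
      by (simp_all add: mem_attacked_iff consolidated_def)
    \<comment> \<open>A service with nonpositive threshold is attacked by every attack, in particular by \<open>\<alpha>t\<close>.\<close>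
    moreover have "0 \<le> (\<Sum>v\<in>V. \<alpha>t v s)"
      using attack_bounds \<open>s \<in> S\<close> by (intro sum_nonneg) auto
    ultimately have "s \<in> targets"
      unfolding targets_def mem_attacked_iff by linarith
    with \<open>s \<notin> targets\<close> show False ..
  qed
next
  fix s
  assume "s \<in> targets"
  then show "s \<in> attacked V S w \<theta> consolidated"
    using targets_subset sum_consolidated by (auto simp: mem_attacked_iff)
qed

lemma is_attack_consolidated: "is_attack V S w consolidated"
  unfolding is_attack_def consolidated_def
  using consolidation_weight_bounds allocation allocation_nonneg
  by (auto simp: mult_left_le_one_le)

lemma consolidated_attack_consolidated:
  "consolidated_attack V S w \<theta> ws \<theta>0 ord consolidated"
  unfolding consolidated_attack_def Let_def attacked_consolidated
  by (auto simp: consolidated_def consolidation_weight_def rank_ord)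

lemma attack_prize_consolidated:
  "attack_prize V S w \<theta> \<pi> consolidated = attack_prize V S w \<theta> \<pi> \<alpha>t"
  by (simp add: attack_prize_def attacked_consolidated targets_def)

lemma attack_cost_consolidated_le:
  "attack_cost V S \<sigma> w \<theta> consolidated \<le> attack_cost V S \<sigma> w \<theta> \<alpha>t"
proof -
  define W where "W = (\<Sum>s\<in>targets. ws s)"
  define x where "x v = (\<Sum>s\<in>targets. \<alpha>t v s)" for v
  define t where "t = \<theta>0 * real (card V)"
  have cost_t: "attack_cost V S \<sigma> w \<theta> \<alpha>t = (\<Sum>v\<in>V. min \<sigma>0 (x v))"
    unfolding attack_cost_def targets_def[symmetric] x_def by (simp add: stake)
  have "attack_cost V S \<sigma> w \<theta> consolidated = (\<Sum>v\<in>V. min \<sigma>0 (consolidation_weight t (rank v) * W))"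
    unfolding attack_cost_def attacked_consolidated
    by (intro sum.cong) (auto simp: stake consolidated_def W_def t_def sum_distrib_left)
  also have "\<dots> = (\<Sum>i\<in>{1..card V}. min \<sigma>0 (consolidation_weight t i * W))"
    by (rule sum_rank)
  also have "\<dots> \<le> attack_cost V S \<sigma> w \<theta> \<alpha>t"
  proof (cases "targets = {}")
    case True
    \<comment> \<open>Here \<open>\<theta>0\<close> need not lie in \<open>[0,1]\<close> (e.g. if \<open>S = {}\<close>), but \<open>W = 0\<close> and both costs vanish.\<close>
    then show ?thesis
      using stake_pos by (simp add: cost_t W_def x_def)
  next
    case False
    then have "0 \<le> t" "t \<le> real (card V)"
      using targets_subset threshold_bounds by (auto simp: t_def mult_left_le_one_le)
    moreover have "\<forall>v\<in>V. 0 \<le> x v \<and> x v \<le> W"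
      using attack_bounds targets_subset
      by (auto simp: x_def W_def subsetD intro!: sum_nonneg sum_mono)
    moreover have "(\<Sum>v\<in>V. x v) = t * W"
      unfolding x_def W_def t_def
      by (subst sum.swap) (simp add: sum_targets sum_distrib_left mult.assoc)
    ultimately show ?thesis
      unfolding cost_t using V_finite stake_pos
      by (intro sum_min_consolidation_weight_le) auto
  qed
  finally show ?thesis .
qed

end

theorem mainTheorem11:
  fixes V :: "'v set" and S :: "'s set"
    and \<sigma> :: "'v \<Rightarrow> real" and w :: "'v \<Rightarrow> 's \<Rightarrow> real"
    and \<theta> :: "'s \<Rightarrow> real" and \<pi> :: "'s \<Rightarrow> real"
    and \<sigma>0 :: real and ws :: "'s \<Rightarrow> real" and \<theta>0 :: real
    and \<alpha>t :: "'v \<Rightarrow> 's \<Rightarrow> real"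
  assumes "symmetric_network V S \<sigma> w \<theta> \<pi> \<sigma>0 ws \<theta>0"
    and "is_attack V S w \<alpha>t"
    and "tight_attack V S w \<theta> ws \<theta>0 \<alpha>t"
  shows "\<exists>ord \<alpha>c. bij_betw ord {1..card V} V \<and>
           is_attack V S w \<alpha>c \<and>
           consolidated_attack V S w \<theta> ws \<theta>0 ord \<alpha>c \<and>
           attack_cost V S \<sigma> w \<theta> \<alpha>c \<le> attack_cost V S \<sigma> w \<theta> \<alpha>t \<and>
           attack_prize V S w \<theta> \<pi> \<alpha>c = attack_prize V S w \<theta> \<pi> \<alpha>t"
proof -
  have "finite V"
    using assms(1) by (simp add: symmetric_network_def restaking_network_def)
  then obtain ord where ord: "bij_betw ord {1..card V} V"
    using ex_bij_betw_nat_finite_1 by blast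
  interpret tight_symmetric_attack V S \<sigma> w \<theta> \<pi> \<sigma>0 ws \<theta>0 \<alpha>t ord
    using assms ord by unfold_locales
  show ?thesis
    by (intro exI[of _ ord] exI[of _ consolidated] conjI ord is_attack_consolidated
        consolidated_attack_consolidated attack_cost_consolidated_le attack_prize_consolidated)
qed

end
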